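(* For all $0<b<B\le1$ and every integer $n\ge2$, letting $k=\min\big(\lfloor 1/b+1/2\rfloor,\ \lceil 2B/b\rceil-1,\ n\big)$, $$\max\Big(2-b,\ \frac{k\,(2-k b)}{2-b}\Big)\le\textsc{PoF-Profit-Submodular}(b,B)\le\min\big(\lceil 2B/b\rceil-1,\,n\big).$$
   Context: An instance $\langle A,f,c\rangle$ consists of a finite set $A$ of agents, a monotone nondecreasing $f:2^A\to[0,1]$, and costs $c_i\ge0$. For $S\subseteq A$, $i\in S$: $f_S(i)=f(S)-f(S\setminus\{i\})$; $p(S)=\sum_{i\in S}c_i/f_S(i)$ (conventions: $0$ if $c_i=0=f_S(i)$, $\infty$ if $c_i>0=f_S(i)$); the profit is $g(S)=(1-p(S))f(S)$. $f$ is submodular if $f_S(i)\ge f_{S'}(i)$ whenever $S\subseteq S'$, $i\in S$. $\textsc{Max-Profit}(B)=\max\{g(S):p(S)\le B\}$. $\textsc{PoF-Profit-Submodular}(b,B)$ is the supremum of $\textsc{Max-Profit}(B)/\textsc{Max-Profit}(b)$ over all instances with submodular $f$, at most $n$ agents, and $\max_{i\in A}p(\{i\})\le b$. *)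

theory Defs
  imports Complex_Main "HOL-Library.Extended_Real"
begin

(* Agents are natural numbers (WLOG: any finite agent set embeds into nat).
   An instance is (A, f, c) with A a finite set of agents, f defined on subsets of A. *)

definition marg :: "(nat set \<Rightarrow> real) \<Rightarrow> nat set \<Rightarrow> nat \<Rightarrow> real" where
  "marg f S i = f S - f (S - {i})"

definition pay :: "(nat set \<Rightarrow> real) \<Rightarrow> (nat \<Rightarrow> real) \<Rightarrow> nat set \<Rightarrow> ereal" where
  "pay f c S = (\<Sum>i\<in>S. if marg f S i = 0 then (if c i = 0 then 0 else \<infinity>)
                         else ereal (c i / marg f S i))"

(* profit g(S) = (1 - p(S)) f(S); only used for sets with finite payment *)
definition profit :: "(nat set \<Rightarrow> real) \<Rightarrow> (nat \<Rightarrow> real) \<Rightarrow> nat set \<Rightarrow> real" where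
  "profit f c S = (1 - real_of_ereal (pay f c S)) * f S"

definition max_profit :: "nat set \<Rightarrow> (nat set \<Rightarrow> real) \<Rightarrow> (nat \<Rightarrow> real) \<Rightarrow> real \<Rightarrow> real" where
  "max_profit A f c B = Max (profit f c ` {S. S \<subseteq> A \<and> pay f c S \<le> ereal B})"

definition valid_instance :: "nat set \<Rightarrow> (nat set \<Rightarrow> real) \<Rightarrow> (nat \<Rightarrow> real) \<Rightarrow> bool" where
  "valid_instance A f c \<longleftrightarrow> finite A
     \<and> (\<forall>S\<subseteq>A. 0 \<le> f S \<and> f S \<le> 1)
     \<and> (\<forall>S T. S \<subseteq> T \<and> T \<subseteq> A \<longrightarrow> f S \<le> f T)
     \<and> (\<forall>i\<in>A. 0 \<le> c i)"

definition submodular_on :: "nat set \<Rightarrow> (nat set \<Rightarrow> real) \<Rightarrow> bool" where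
  "submodular_on A f \<longleftrightarrow> (\<forall>S S' i. S \<subseteq> S' \<and> S' \<subseteq> A \<and> i \<in> S \<longrightarrow> marg f S i \<ge> marg f S' i)"

definition pof_profit_submodular :: "nat \<Rightarrow> real \<Rightarrow> real \<Rightarrow> ereal" where
  "pof_profit_submodular n b B =
     (SUP I \<in> {(A, f, c). valid_instance A f c \<and> submodular_on A f \<and> card A \<le> n
                \<and> (\<forall>i\<in>A. pay f c {i} \<le> ereal b)}.
        (case I of (A, f, c) \<Rightarrow> ereal (max_profit A f c B / max_profit A f c b)))"

end

theory Submission
  imports Defs "HOL-Library.Disjoint_Sets"
begin

(* Upper bound: let S be optimal for budget B and give each agent i of S the share
   w i = c i / f_S(i), so that p(S) = w(S) <= B.  By submodularity every U \<subseteq> S pays at most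
   w(U), and f(S) <= \<Sum> f(U) over any partition of S.  So if S is partitioned into blocks that
   are singletons or have weight at most b, every block is affordable with budget b and
   g(S) <= \<Sum> (1 - w(U)) f(U) <= |P| Max-Profit(b).  Merging two blocks as long as their total
   weight is at most b gives such a partition in which any two blocks weigh more than b
   together, whence |P| b < 2 w(S) <= 2B; trivially also |P| <= |S| <= n.

   Lower bounds: a two-agent instance, and k identical agents with additive value |T|/k, each
   costing slightly more than half of b, so that the budget b affords only one agent while
   the budget B affords all of them.  As the excess \<epsilon> tends to 0 their ratios tend to 2 - b and
   k (2 - k b) / (2 - b). *)

lemma valid_instance_mono:
  "valid_instance A f c \<Longrightarrow> S \<subseteq> T \<Longrightarrow> T \<subseteq> A \<Longrightarrow> f S \<le> f T"
  unfolding valid_instance_def by blast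

lemma valid_instance_finite_subset: "valid_instance A f c \<Longrightarrow> S \<subseteq> A \<Longrightarrow> finite S"
  unfolding valid_instance_def using finite_subset by auto

lemma valid_instance_nonneg: "valid_instance A f c \<Longrightarrow> S \<subseteq> A \<Longrightarrow> 0 \<le> f S"
  unfolding valid_instance_def by blast

lemma valid_instance_cost_nonneg: "valid_instance A f c \<Longrightarrow> i \<in> A \<Longrightarrow> 0 \<le> c i"
  unfolding valid_instance_def by blast

lemma marg_nonneg: "valid_instance A f c \<Longrightarrow> S \<subseteq> A \<Longrightarrow> 0 \<le> marg f S i"
  unfolding marg_def using valid_instance_mono[of A f c "S - {i}" S] by auto

lemma submodular_onD:
  "submodular_on A f \<Longrightarrow> S \<subseteq> S' \<Longrightarrow> S' \<subseteq> A \<Longrightarrow> i \<in> S \<Longrightarrow> marg f S' i \<le> marg f S i"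
  unfolding submodular_on_def by blast

lemma submodular_union_le:
  assumes sm: "submodular_on A f" and "finite Y" and "X \<union> Y \<subseteq> A" and "X \<inter> Y = {}"
  shows "f (X \<union> Y) + f {} \<le> f X + f Y"
  using assms(2-)
proof (induction Y rule: finite_induct)
  case (insert y Y)
  have "marg f (X \<union> insert y Y) y \<le> marg f (insert y Y) y"
    using insert.prems(1) by (intro submodular_onD[OF sm]) auto
  moreover have "X \<union> insert y Y - {y} = X \<union> Y" and "insert y Y - {y} = Y"
    using insert.hyps(2) insert.prems(2) by auto
  ultimately have "f (X \<union> insert y Y) - f (X \<union> Y) \<le> f (insert y Y) - f Y"
    unfolding marg_def by simp
  with insert show ?case by auto
qed simp

lemma submodular_Union_le:
  assumes sm: "submodular_on A f" and "finite A" and "0 \<le> f {}"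
    and "finite P" and "P \<noteq> {}" and "\<Union>P \<subseteq> A" and "disjoint P"
  shows "f (\<Union>P) \<le> (\<Sum>U\<in>P. f U)"
  using assms(4-)
proof (induction P rule: finite_ne_induct)
  case (insert U P)
  have "finite (\<Union>P)" using \<open>finite A\<close> insert.prems(1) finite_subset by auto
  moreover have "U \<inter> \<Union>P = {}"
    using insert.hyps(3) insert.prems(2) by (auto simp: pairwise_insert disjnt_def)
  ultimately have "f (U \<union> \<Union>P) + f {} \<le> f U + f (\<Union>P)"
    using insert.prems(1) by (intro submodular_union_le[OF sm]) auto
  moreover have "f (\<Union>P) \<le> (\<Sum>U\<in>P. f U)"
    using insert.prems by (intro insert.IH) (auto simp: pairwise_insert)
  ultimately show ?case using insert.hyps \<open>0 \<le> f {}\<close> by simp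
qed simp

(* Where f_S(i) = 0, division yields the junk value 0; this agrees with pay f c S as long as
   that payment is finite, since then c i = 0 (see pay_finite_cost_eq_0). *)
definition share :: "(nat set \<Rightarrow> real) \<Rightarrow> (nat \<Rightarrow> real) \<Rightarrow> nat set \<Rightarrow> nat \<Rightarrow> real" where
  "share f c S i = c i / marg f S i"

lemma share_nonneg:
  "valid_instance A f c \<Longrightarrow> S \<subseteq> A \<Longrightarrow> i \<in> S \<Longrightarrow> 0 \<le> share f c S i"
  unfolding share_def by (auto simp: marg_nonneg valid_instance_cost_nonneg subsetD)

lemma pay_nonneg: "valid_instance A f c \<Longrightarrow> S \<subseteq> A \<Longrightarrow> 0 \<le> pay f c S"
  unfolding pay_def
  by (intro sum_nonneg) (auto simp: marg_nonneg valid_instance_cost_nonneg subsetD)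

lemma pay_empty [simp]: "pay f c {} = 0"
  unfolding pay_def by simp

lemma pay_finite_cost_eq_0:
  assumes "finite S" "pay f c S \<noteq> \<infinity>" "i \<in> S" "marg f S i = 0"
  shows "c i = 0"
  using assms unfolding pay_def sum_Pinfty by (metis (full_types) ereal.distinct(5))

lemma pay_eq_sum_share:
  assumes "finite S" "pay f c S \<noteq> \<infinity>"
  shows "pay f c S = ereal (sum (share f c S) S)"
proof -
  have "pay f c S = (\<Sum>i\<in>S. ereal (share f c S i))"
    unfolding pay_def share_def using pay_finite_cost_eq_0[OF assms] by (intro sum.cong) auto
  then show ?thesis by simp
qed

lemma pay_subset_le_sum_share:
  assumes v: "valid_instance A f c" and sm: "submodular_on A f" and S: "S \<subseteq> A"
    and pf: "pay f c S \<noteq> \<infinity>" and U: "U \<subseteq> S"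
  shows "pay f c U \<le> ereal (sum (share f c S) U)"
proof -
  have fS: "finite S" using valid_instance_finite_subset[OF v S] .
  have "pay f c U \<le> (\<Sum>i\<in>U. ereal (share f c S i))"
    unfolding pay_def share_def
  proof (rule sum_mono)
    fix i assume i: "i \<in> U"
    then have iS: "i \<in> S" using U by blast
    have ci: "0 \<le> c i" using valid_instance_cost_nonneg[OF v] S iS by blast
    have mS: "0 \<le> marg f S i" using marg_nonneg[OF v S] .
    have mU: "marg f S i \<le> marg f U i" using submodular_onD[OF sm U S i] .
    show "(if marg f U i = 0 then if c i = 0 then 0 else \<infinity> else ereal (c i / marg f U i))
          \<le> ereal (c i / marg f S i)"
    proof (cases "marg f S i = 0")
      case True
      then have "c i = 0" using pay_finite_cost_eq_0[OF fS pf iS] by blast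
      then show ?thesis by simp
    next
      case False
      then have pos: "0 < marg f S i" using mS by simp
      then have "c i / marg f U i \<le> c i / marg f S i"
        using mU ci by (intro divide_left_mono) auto
      then show ?thesis using pos mU by auto
    qed
  qed
  then show ?thesis by simp
qed

lemma profit_ge:
  assumes "valid_instance A f c" and "U \<subseteq> A" and "pay f c U \<le> ereal x"
  shows "(1 - x) * f U \<le> profit f c U"
proof -
  obtain y where y: "pay f c U = ereal y" and "0 \<le> y" "y \<le> x"
    using assms(3) pay_nonneg[OF assms(1,2)] by (cases "pay f c U") auto
  then show ?thesis
    unfolding profit_def using valid_instance_nonneg[OF assms(1,2)] by (simp add: mult_right_mono)
qed

lemma finite_budget_feasible:
  "valid_instance A f c \<Longrightarrow> finite {S. S \<subseteq> A \<and> pay f c S \<le> ereal x}"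
  unfolding valid_instance_def by (auto intro: finite_subset[of _ "Pow A"])

lemma max_profit_ge:
  assumes "valid_instance A f c" and "T \<subseteq> A" and "pay f c T \<le> ereal x"
  shows "profit f c T \<le> max_profit A f c x"
  unfolding max_profit_def using assms finite_budget_feasible[OF assms(1)] by (intro Max_ge) auto

lemma max_profit_attained:
  assumes "valid_instance A f c" and "0 \<le> x"
  obtains S where "S \<subseteq> A" "pay f c S \<le> ereal x" "max_profit A f c x = profit f c S"
proof -
  have "max_profit A f c x \<in> profit f c ` {S. S \<subseteq> A \<and> pay f c S \<le> ereal x}"
    unfolding max_profit_def using assms finite_budget_feasible[OF assms(1)]
    by (intro Max_in) auto
  with that show ?thesis by blast
qed

lemma max_profit_le:
  assumes "valid_instance A f c" and "0 \<le> x"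
    and "\<And>S. S \<subseteq> A \<Longrightarrow> pay f c S \<le> ereal x \<Longrightarrow> profit f c S \<le> M"
  shows "max_profit A f c x \<le> M"
proof -
  obtain S where "S \<subseteq> A" "pay f c S \<le> ereal x" "max_profit A f c x = profit f c S"
    using max_profit_attained[OF assms(1,2)] .
  then show ?thesis using assms(3) by simp
qed

lemma max_profit_nonneg:
  assumes "valid_instance A f c" and "0 \<le> x"
  shows "0 \<le> max_profit A f c x"
  using max_profit_ge[OF assms(1), of "{}" x] valid_instance_nonneg[OF assms(1), of "{}"] assms(2)
  unfolding profit_def by simp

definition budget_partition :: "'a set \<Rightarrow> ('a \<Rightarrow> real) \<Rightarrow> real \<Rightarrow> 'a set set \<Rightarrow> bool" where
  "budget_partition S w b P \<longleftrightarrow> partition_on S P \<and> (\<forall>U\<in>P. card U = 1 \<or> sum w U \<le> b)"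

lemma budget_partition_singletons: "budget_partition S w b ((\<lambda>i. {i}) ` S)"
  unfolding budget_partition_def by (auto intro: partition_on_singletons)

lemma budget_partition_merge:
  assumes fS: "finite S" and P: "budget_partition S w b P"
    and UV: "U \<in> P" "V \<in> P" "U \<noteq> V" and light: "sum w U + sum w V \<le> b"
  shows "budget_partition S w b (insert (U \<union> V) (P - {U, V}))"
    and "card (insert (U \<union> V) (P - {U, V})) < card P"
proof -
  have part: "partition_on S P" and blocks: "\<forall>X\<in>P. card X = 1 \<or> sum w X \<le> b"
    using P unfolding budget_partition_def by auto
  have Pfin: "finite P" using finite_elements[OF fS part] .
  have dj: "U \<inter> V = {}" "\<forall>X\<in>P - {U, V}. U \<inter> X = {} \<and> V \<inter> X = {}"
    using part UV unfolding partition_on_def pairwise_def disjnt_def by auto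
  have "U \<subseteq> S" "V \<subseteq> S" using UV partition_onD1[OF part] by auto
  then have "finite U" "finite V" using fS finite_subset by auto
  then have "sum w (U \<union> V) \<le> b" using dj light by (simp add: sum.union_disjoint)
  moreover have "partition_on S (insert (U \<union> V) (P - {U, V}))"
    using part UV dj unfolding partition_on_def pairwise_def disjnt_def by auto
  ultimately show "budget_partition S w b (insert (U \<union> V) (P - {U, V}))"
    using blocks unfolding budget_partition_def by auto
  have "card (P - {U, V}) = card P - 2" using UV Pfin by (simp add: card_Diff_subset)
  moreover have "2 \<le> card P" using UV Pfin card_mono[of P "{U, V}"] by auto
  moreover have "card (insert (U \<union> V) (P - {U, V})) \<le> Suc (card (P - {U, V}))"
    using Pfin by (simp add: card_insert_le_m1 card_insert_if)
  ultimately show "card (insert (U \<union> V) (P - {U, V})) < card P" by linarith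
qed

lemma budget_partition_exists_pairwise_heavy:
  assumes "finite S" and "budget_partition S w b P"
  obtains Q where "budget_partition S w b Q" and "pairwise (\<lambda>U V. b < sum w U + sum w V) Q"
  using assms(2)
proof (induction "card P" arbitrary: P rule: less_induct)
  case less
  show ?case
  proof (cases "pairwise (\<lambda>U V. b < sum w U + sum w V) P")
    case True
    with less.prems show ?thesis by blast
  next
    case False
    then obtain U V where "U \<in> P" "V \<in> P" "U \<noteq> V" "sum w U + sum w V \<le> b"
      unfolding pairwise_def by force
    note merged = budget_partition_merge[OF assms(1) less.prems(2) this]
    show ?thesis by (rule less.hyps[OF merged(2) less.prems(1) merged(1)])
  qed
qed

lemma card_partition_on_le:
  assumes "finite S" and part: "partition_on S P"
  shows "card P \<le> card S"
proof -
  have fin: "finite U" "U \<noteq> {}" if "U \<in> P" for U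
    using that partition_onD1[OF part] partition_onD3[OF part] \<open>finite S\<close>
    by (auto intro: finite_subset[of U S])
  have "card P = (\<Sum>U\<in>P. 1)" by simp
  also have "\<dots> \<le> (\<Sum>U\<in>P. card U)"
    using fin by (intro sum_mono) (simp add: Suc_leI card_gt_0_iff)
  also have "\<dots> = card S"
    using card_Union_disjoint[OF partition_onD2[OF part]] fin partition_onD1[OF part] by simp
  finally show ?thesis .
qed

(* Sum b < x U + x V over all ordered pairs U \<noteq> V: each x U occurs 2 (r - 1) times. *)
lemma card_mult_lt_twice_sum_if_pairwise:
  fixes x :: "'a \<Rightarrow> real"
  assumes fin: "finite P" and two: "2 \<le> card P" and heavy: "pairwise (\<lambda>U V. b < x U + x V) P"
  shows "real (card P) * b < 2 * sum x P"
proof -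
  define r where "r = real (card P)"
  have card_rest: "real (card (P - {U})) = r - 1" if "U \<in> P" for U
    using that fin two unfolding r_def by (simp add: of_nat_diff)
  have rest_ne: "P - {U} \<noteq> {}" if "U \<in> P" for U
  proof
    assume "P - {U} = {}"
    then have "card P \<le> card {U}" using card_mono[of "{U}" P] by auto
    then show False using two by simp
  qed
  have "(\<Sum>U\<in>P. (r - 1) * b) < (\<Sum>U\<in>P. \<Sum>V\<in>P - {U}. x U + x V)"
  proof (rule sum_strict_mono)
    fix U assume U: "U \<in> P"
    have "(\<Sum>V\<in>P - {U}. b) < (\<Sum>V\<in>P - {U}. x U + x V)"
      using heavy U fin rest_ne[OF U] unfolding pairwise_def by (intro sum_strict_mono) auto
    then show "(r - 1) * b < (\<Sum>V\<in>P - {U}. x U + x V)" using card_rest[OF U] by simp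
  qed (use fin two in auto)
  also have "\<dots> = (\<Sum>U\<in>P. (r - 2) * x U + sum x P)"
  proof (rule sum.cong)
    fix U assume U: "U \<in> P"
    have "(\<Sum>V\<in>P - {U}. x U + x V) = real (card (P - {U})) * x U + sum x (P - {U})"
      by (simp add: sum.distrib)
    also have "\<dots> = (r - 1) * x U + (sum x P - x U)"
      using card_rest[OF U] U fin by (simp add: sum_diff1)
    finally show "(\<Sum>V\<in>P - {U}. x U + x V) = (r - 2) * x U + sum x P"
      by (simp add: algebra_simps)
  qed simp
  also have "\<dots> = (r - 2) * sum x P + r * sum x P"
    unfolding r_def by (simp add: sum.distrib sum_distrib_left)
  finally have "(r - 1) * (r * b) < (r - 1) * (2 * sum x P)"
    unfolding r_def by (simp add: algebra_simps)
  moreover have "0 < r - 1" using two unfolding r_def by simp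
  ultimately show ?thesis unfolding r_def by simp
qed

lemma card_lt_if_pairwise_heavy:
  fixes w :: "'a \<Rightarrow> real"
  assumes fS: "finite S" and part: "partition_on S P"
    and heavy: "pairwise (\<lambda>U V. b < sum w U + sum w V) P"
    and sum_le: "sum w S \<le> B" and "0 < b" "b < B"
  shows "real (card P) < 2 * B / b"
proof (cases "2 \<le> card P")
  case True
  have "real (card P) * b < 2 * sum (sum w) P"
    using card_mult_lt_twice_sum_if_pairwise[OF finite_elements[OF fS part] True heavy] .
  also have "\<dots> \<le> 2 * B" using sum_le sum.partition[OF fS part, of w] by simp
  finally show ?thesis using \<open>0 < b\<close> by (simp add: field_simps)
next
  case False
  moreover have "2 < 2 * B / b" using \<open>0 < b\<close> \<open>b < B\<close> by (simp add: field_simps)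
  ultimately show ?thesis by linarith
qed

lemma budget_partition_block_pay_le:
  assumes v: "valid_instance A f c" and sm: "submodular_on A f" and S: "S \<subseteq> A"
    and pf: "pay f c S \<noteq> \<infinity>" and P: "budget_partition S (share f c S) b P" and U: "U \<in> P"
    and singletons: "\<forall>i\<in>A. pay f c {i} \<le> ereal b"
  shows "pay f c U \<le> ereal b"
proof -
  have US: "U \<subseteq> S" using U P partition_onD1 unfolding budget_partition_def by blast
  consider "card U = 1" | "sum (share f c S) U \<le> b" using P U unfolding budget_partition_def by blast
  then show ?thesis
  proof cases
    case 1
    then obtain i where "U = {i}" by (rule card_1_singletonE)
    then show ?thesis using singletons US S by auto
  next
    case 2
    then show ?thesis
      using pay_subset_le_sum_share[OF v sm S pf US] by (meson ereal_less_eq(3) order_trans)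
  qed
qed

lemma profit_le_card_budget_partition:
  assumes v: "valid_instance A f c" and sm: "submodular_on A f" and S: "S \<subseteq> A" and "S \<noteq> {}"
    and pf: "pay f c S \<noteq> \<infinity>" and P: "budget_partition S (share f c S) b P"
    and singletons: "\<forall>i\<in>A. pay f c {i} \<le> ereal b"
  shows "profit f c S \<le> real (card P) * max_profit A f c b"
proof -
  define w where "w = share f c S"
  have fS: "finite S" using valid_instance_finite_subset[OF v S] .
  have part: "partition_on S P" using P unfolding budget_partition_def by simp
  have sub: "U \<subseteq> S" if "U \<in> P" for U using that partition_onD1[OF part] by blast
  have "f S \<le> (\<Sum>U\<in>P. f U)"
    using submodular_Union_le[OF sm valid_instance_finite_subset[OF v order_refl]
        valid_instance_nonneg[OF v empty_subsetI] finite_elements[OF fS part]]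
      partition_onD1[OF part] partition_onD2[OF part] \<open>S \<noteq> {}\<close> S
    by auto
  moreover have "(\<Sum>U\<in>P. f U * sum w U) \<le> (\<Sum>U\<in>P. f S * sum w U)"
    using valid_instance_mono[OF v sub S] share_nonneg[OF v S] sub unfolding w_def
    by (intro sum_mono mult_right_mono sum_nonneg) auto
  moreover have "profit f c S = (1 - (\<Sum>U\<in>P. sum w U)) * f S"
    unfolding profit_def w_def pay_eq_sum_share[OF fS pf] sum.partition[OF fS part] by simp
  ultimately have "profit f c S \<le> (\<Sum>U\<in>P. (1 - sum w U) * f U)"
    by (simp add: sum_subtractf sum_distrib_left algebra_simps)
  also have "\<dots> \<le> (\<Sum>U\<in>P. max_profit A f c b)"
  proof (rule sum_mono)
    fix U assume U: "U \<in> P"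
    have UA: "U \<subseteq> A" using sub[OF U] S by blast
    have "profit f c U \<le> max_profit A f c b"
      using max_profit_ge[OF v UA budget_partition_block_pay_le[OF v sm S pf P U singletons]] .
    then show "(1 - sum w U) * f U \<le> max_profit A f c b"
      using profit_ge[OF v UA pay_subset_le_sum_share[OF v sm S pf sub[OF U]]] unfolding w_def
      by linarith
  qed
  finally show ?thesis by simp
qed

lemma optimal_profit_le_card_partition:
  assumes v: "valid_instance A f c" and sm: "submodular_on A f" and S: "S \<subseteq> A" "S \<noteq> {}"
    and pS: "pay f c S \<le> ereal B" and singletons: "\<forall>i\<in>A. pay f c {i} \<le> ereal b"
    and b: "0 < b" "b < B"
  obtains P where "partition_on S P" and "real (card P) < 2 * B / b"
    and "profit f c S \<le> real (card P) * max_profit A f c b"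
proof -
  have fS: "finite S" using valid_instance_finite_subset[OF v S(1)] .
  have pf: "pay f c S \<noteq> \<infinity>" using pS by auto
  then have sum_le: "sum (share f c S) S \<le> B" using pay_eq_sum_share[OF fS pf] pS by simp
  obtain P where bp: "budget_partition S (share f c S) b P"
    and heavy: "pairwise (\<lambda>U V. b < sum (share f c S) U + sum (share f c S) V) P"
    using budget_partition_exists_pairwise_heavy[OF fS budget_partition_singletons] .
  have part: "partition_on S P" using bp unfolding budget_partition_def by simp
  show ?thesis
    using that[OF part card_lt_if_pairwise_heavy[OF fS part heavy sum_le b]]
      profit_le_card_budget_partition[OF v sm S pf bp singletons] .
qed

lemma max_profit_ratio_le:
  assumes v: "valid_instance A f c" and sm: "submodular_on A f" and cA: "card A \<le> n"
    and singletons: "\<forall>i\<in>A. pay f c {i} \<le> ereal b"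
    and b: "0 < b" "b < B" and n: "1 \<le> n"
  shows "max_profit A f c B / max_profit A f c b \<le> real_of_int (min (\<lceil>2 * B / b\<rceil> - 1) (int n))"
proof -
  define K where "K = real_of_int (min (\<lceil>2 * B / b\<rceil> - 1) (int n))"
  define M where "M = max_profit A f c b"
  have "2 < \<lceil>2 * B / b\<rceil>" using b by (simp add: less_ceiling_iff field_simps)
  then have K1: "1 \<le> K" unfolding K_def using n by simp
  have "0 \<le> M" using max_profit_nonneg[OF v] b unfolding M_def by simp
  obtain S where S: "S \<subseteq> A" and pS: "pay f c S \<le> ereal B"
    and opt: "max_profit A f c B = profit f c S"
    using max_profit_attained[OF v, of B] b by auto
  have "profit f c S \<le> K * M"
  proof (cases "S = {}")
    case True
    then have "profit f c S \<le> M" using max_profit_ge[OF v, of S b] b unfolding M_def by simp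
    also have "\<dots> \<le> K * M" using K1 \<open>0 \<le> M\<close> by (simp add: mult_le_cancel_right1)
    finally show ?thesis .
  next
    case False
    obtain P where part: "partition_on S P" and "real (card P) < 2 * B / b"
      and bound: "profit f c S \<le> real (card P) * M"
      using optimal_profit_le_card_partition[OF v sm S False pS singletons b] unfolding M_def .
    then have "int (card P) < \<lceil>2 * B / b\<rceil>" by (simp add: less_ceiling_iff)
    moreover have "card P \<le> n"
      using card_partition_on_le[OF valid_instance_finite_subset[OF v S] part]
        card_mono[OF valid_instance_finite_subset[OF v order_refl] S] cA
      by linarith
    ultimately have "real (card P) \<le> K" unfolding K_def by linarith
    then show ?thesis using bound mult_right_mono[OF _ \<open>0 \<le> M\<close>] by fastforce
  qed
  then show ?thesis
    unfolding opt M_def[symmetric] K_def[symmetric]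
    using K1 \<open>0 \<le> M\<close> by (cases "M = 0") (auto simp: pos_divide_le_eq)
qed

lemma pof_profit_submodular_le:
  assumes "\<And>A f c. valid_instance A f c \<Longrightarrow> submodular_on A f \<Longrightarrow> card A \<le> n
      \<Longrightarrow> \<forall>i\<in>A. pay f c {i} \<le> ereal b \<Longrightarrow> max_profit A f c B / max_profit A f c b \<le> K"
  shows "pof_profit_submodular n b B \<le> ereal K"
  unfolding pof_profit_submodular_def by (rule SUP_least) (auto simp: assms)

lemma pof_profit_submodular_ge:
  assumes "valid_instance A f c" and "submodular_on A f" and "card A \<le> n"
    and "\<forall>i\<in>A. pay f c {i} \<le> ereal b"
  shows "ereal (max_profit A f c B / max_profit A f c b) \<le> pof_profit_submodular n b B"
  unfolding pof_profit_submodular_def by (rule SUP_upper2[of "(A, f, c)"]) (use assms in auto)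

lemma ereal_le_if_tendsto_at_right_0:
  fixes g :: "real \<Rightarrow> real"
  assumes "0 < d" and "\<And>e. 0 < e \<Longrightarrow> e < d \<Longrightarrow> ereal (g e) \<le> P" and "(g \<longlongrightarrow> L) (at_right 0)"
  shows "ereal L \<le> P"
proof (rule tendsto_upperbound)
  show "((\<lambda>e. ereal (g e)) \<longlongrightarrow> ereal L) (at_right 0)" using assms(3) by simp
  show "\<forall>\<^sub>F e in at_right 0. ereal (g e) \<le> P"
    using eventually_at_right_real[OF assms(1)] by eventually_elim (use assms(2) in auto)
qed simp

definition two_agent_value :: "real \<Rightarrow> real \<Rightarrow> nat set \<Rightarrow> real" where
  "two_agent_value x y T =
     (if 0 \<in> T \<and> 1 \<in> T then 1 else if 0 \<in> T then x else if 1 \<in> T then y else 0)"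

lemma subset_doubleton_cases: "T \<subseteq> {x, y} \<Longrightarrow> T = {} \<or> T = {x} \<or> T = {y} \<or> T = {x, y}"
  by blast

lemma valid_instance_two_agent_value:
  assumes "0 \<le> x" "x \<le> 1" "0 \<le> y" "y \<le> 1" "0 \<le> c 0" "0 \<le> c 1"
  shows "valid_instance {0, 1} (two_agent_value x y) c"
  unfolding valid_instance_def
proof (intro conjI allI impI ballI)
  fix S T assume "S \<subseteq> T \<and> T \<subseteq> {0, 1::nat}"
  then show "two_agent_value x y S \<le> two_agent_value x y T"
    using subset_doubleton_cases[of S 0 1] subset_doubleton_cases[of T 0 1] assms
    unfolding two_agent_value_def by auto
qed (use assms in \<open>auto simp: two_agent_value_def\<close>)

lemma submodular_two_agent_value:
  assumes "1 \<le> x + y"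
  shows "submodular_on {0, 1} (two_agent_value x y)"
  unfolding submodular_on_def
proof (intro allI impI)
  fix S S' i assume "S \<subseteq> S' \<and> S' \<subseteq> {0, 1::nat} \<and> i \<in> S"
  then show "marg (two_agent_value x y) S' i \<le> marg (two_agent_value x y) S i"
    using subset_doubleton_cases[of S 0 1] subset_doubleton_cases[of S' 0 1] assms
    unfolding marg_def two_agent_value_def by auto
qed

(* Agent 0 alone uses up the budget b and agent 1 is free but worth less, while the pair needs
   b (1 + e); so budget b earns (1 - b) (1 + e) / (2 - b) and budget B earns 1 - b (1 + e). *)
lemma two_agent_instance_ratio:
  fixes b B e :: real
  assumes b: "0 < b" "b < B" "B \<le> 1" and n: "2 \<le> n"
    and e: "0 < e" "e \<le> 1 - b" "b * (1 + e) \<le> B"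
  shows "ereal ((2 - b) * (1 - b * (1 + e)) / ((1 - b) * (1 + e))) \<le> pof_profit_submodular n b B"
proof -
  define m where "m = 1 / (2 - b)"
  define a where "a = m * (1 + e)"
  define f where "f = two_agent_value a (1 - m)"
  define c where "c i = (if i = 0 then b * a else 0)" for i :: nat
  have b1: "b < 1" using b by simp
  have m: "0 < m" "m < 1" "1 - m = (1 - b) * m" unfolding m_def using b b1 by (simp_all add: field_simps)
  have a: "m < a" "a \<le> 1" unfolding a_def m_def using e b1 by (simp_all add: field_simps)
  have v: "valid_instance {0, 1} f c"
    unfolding f_def using m a b by (intro valid_instance_two_agent_value) (auto simp: c_def)
  have sm: "submodular_on {0, 1} f"
    unfolding f_def using a by (intro submodular_two_agent_value) simp
  have pay0: "pay f c {0} = ereal b" and pay1: "pay f c {1} = 0"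
    using m a unfolding pay_def marg_def f_def two_agent_value_def c_def by auto
  have "pay f c {0, 1} = ereal (b * a / m)"
    using m(1,2) a unfolding pay_def marg_def f_def two_agent_value_def c_def by auto
  then have pay01: "pay f c {0, 1} = ereal (b * (1 + e))"
    unfolding a_def using m by simp
  have Mb: "max_profit {0, 1} f c b = (1 - b) * a"
  proof (rule antisym)
    show "max_profit {0, 1} f c b \<le> (1 - b) * a"
    proof (rule max_profit_le[OF v])
      fix S assume "S \<subseteq> {0, 1}" and "pay f c S \<le> ereal b"
      moreover have "S \<noteq> {0, 1}" using \<open>pay f c S \<le> ereal b\<close> pay01 e b by auto
      ultimately have "S = {} \<or> S = {0} \<or> S = {1}" using subset_doubleton_cases by blast
      then show "profit f c S \<le> (1 - b) * a"
        using pay0 pay1 m a b1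
        unfolding profit_def f_def two_agent_value_def by (auto simp: mult_left_mono)
    qed (use b in simp)
    show "(1 - b) * a \<le> max_profit {0, 1} f c b"
      using max_profit_ge[OF v, of "{0}" b] pay0 unfolding profit_def f_def two_agent_value_def
      by simp
  qed
  have MB: "1 - b * (1 + e) \<le> max_profit {0, 1} f c B"
    using max_profit_ge[OF v, of "{0, 1}" B] pay01 e
    unfolding profit_def f_def two_agent_value_def by simp
  have "(2 - b) * (1 - b * (1 + e)) / ((1 - b) * (1 + e)) = (1 - b * (1 + e)) / ((1 - b) * a)"
    unfolding a_def m_def using b1 by simp
  also have "\<dots> \<le> max_profit {0, 1} f c B / max_profit {0, 1} f c b"
    unfolding Mb using MB m a b1 by (intro divide_right_mono) auto
  also have "ereal \<dots> \<le> pof_profit_submodular n b B"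
    using pof_profit_submodular_ge[OF v sm] n pay0 pay1 b by auto
  finally show ?thesis by simp
qed

definition uniform_value :: "nat \<Rightarrow> nat set \<Rightarrow> real" where
  "uniform_value k T = real (card T) / real k"

lemma marg_uniform_value:
  assumes "finite S" "i \<in> S" "0 < k"
  shows "marg (uniform_value k) S i = 1 / real k"
proof -
  have "0 < card S" using assms card_gt_0_iff by blast
  then have "real (card (S - {i})) = real (card S) - 1"
    using assms by (simp add: of_nat_diff Suc_le_eq)
  then show ?thesis unfolding marg_def uniform_value_def using assms(3) by (simp add: field_simps)
qed

lemma valid_instance_uniform_value:
  assumes "0 \<le> p"
  shows "valid_instance {..<k} (uniform_value k) (\<lambda>_. p)"
  unfolding valid_instance_def
proof (intro conjI allI impI ballI)
  fix S assume "S \<subseteq> {..<k}"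
  then have "card S \<le> k" using card_mono[of "{..<k}" S] by simp
  then show "0 \<le> uniform_value k S" "uniform_value k S \<le> 1"
    unfolding uniform_value_def by (auto simp: divide_le_eq_1)
next
  fix S T assume "S \<subseteq> T \<and> T \<subseteq> {..<k}"
  then have "card S \<le> card T" by (meson card_mono finite_lessThan finite_subset)
  then show "uniform_value k S \<le> uniform_value k T"
    unfolding uniform_value_def by (simp add: divide_right_mono)
qed (use assms in simp_all)

lemma submodular_uniform_value:
  assumes "finite A" "0 < k"
  shows "submodular_on A (uniform_value k)"
  unfolding submodular_on_def
proof (intro allI impI)
  fix S S' i assume "S \<subseteq> S' \<and> S' \<subseteq> A \<and> i \<in> S"
  then have "finite S" "finite S'" "i \<in> S" "i \<in> S'"
    using finite_subset[OF _ assms(1)] by auto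
  then show "marg (uniform_value k) S' i \<le> marg (uniform_value k) S i"
    using marg_uniform_value assms(2) by simp
qed

lemma pay_uniform_value:
  assumes "finite S" "0 < k"
  shows "pay (uniform_value k) (\<lambda>_. p / real k) S = ereal (real (card S) * p)"
proof -
  have "pay (uniform_value k) (\<lambda>_. p / real k) S = (\<Sum>i\<in>S. ereal p)"
    unfolding pay_def using marg_uniform_value[OF assms(1) _ assms(2)] assms(2)
    by (intro sum.cong) simp_all
  then show ?thesis by simp
qed

lemma uniform_instance_ratio:
  fixes b B e :: real and k n :: nat
  assumes b: "0 < b" "b < B" "B \<le> 1" and k: "1 \<le> k" "k \<le> n"
    and e: "0 < e" "e \<le> 1" "real k * (b * (1 + e) / 2) \<le> B"
  shows "ereal (real k * (1 - real k * (b * (1 + e) / 2)) / (1 - b * (1 + e) / 2))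
    \<le> pof_profit_submodular n b B"
proof -
  define p where "p = b * (1 + e) / 2"
  define A where "A = {..<k}"
  define f where "f = uniform_value k"
  define c where "c i = p / real k" for i :: nat
  have kpos: "0 < real k" using k by simp
  have "0 < b * e" "b * e \<le> b" using b e by (simp_all add: mult_left_le)
  then have "0 < p" "p \<le> b" "b < 2 * p" unfolding p_def using b by (simp_all add: field_simps)
  moreover have "p < 1" using \<open>p \<le> b\<close> b by linarith
  ultimately have p: "0 < p" "p \<le> b" "b < 2 * p" "p < 1" by blast+
  have v: "valid_instance A f c"
    unfolding A_def f_def c_def using valid_instance_uniform_value p kpos by simp
  have sm: "submodular_on A f"
    unfolding A_def f_def using submodular_uniform_value k by simp
  have pay: "pay f c S = ereal (real (card S) * p)" if "S \<subseteq> A" for S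
    using pay_uniform_value[OF finite_subset[OF that], of k p] k
    unfolding A_def f_def c_def by simp
  have profit: "profit f c S = (1 - real (card S) * p) * real (card S) / real k" if "S \<subseteq> A" for S
    using pay[OF that] unfolding profit_def by (simp add: f_def uniform_value_def)
  have "{0} \<subseteq> A" unfolding A_def using k by auto
  have Mb: "max_profit A f c b = (1 - p) / real k"
  proof (rule antisym)
    show "max_profit A f c b \<le> (1 - p) / real k"
    proof (rule max_profit_le[OF v])
      fix S assume S: "S \<subseteq> A" and "pay f c S \<le> ereal b"
      then have "real (card S) * p \<le> b" using pay[OF S] by simp
      then have "real (card S) * p < 2 * p" using p by linarith
      then have "card S < 2" using p by simp
      then have "card S = 0 \<or> card S = 1" by linarith
      then show "profit f c S \<le> (1 - p) / real k"
        using profit[OF S] p kpos by auto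
    qed (use b in simp)
    show "(1 - p) / real k \<le> max_profit A f c b"
      using max_profit_ge[OF v \<open>{0} \<subseteq> A\<close>, of b] pay[OF \<open>{0} \<subseteq> A\<close>] profit[OF \<open>{0} \<subseteq> A\<close>] p
      by simp
  qed
  have MB: "1 - real k * p \<le> max_profit A f c B"
    using max_profit_ge[OF v order_refl, of B] pay[of A] profit[of A] e kpos
    unfolding A_def p_def by simp
  have "real k * (1 - real k * p) / (1 - p) = (1 - real k * p) / ((1 - p) / real k)"
    using kpos by simp
  also have "\<dots> \<le> max_profit A f c B / max_profit A f c b"
    unfolding Mb using MB p kpos by (intro divide_right_mono) auto
  also have "ereal \<dots> \<le> pof_profit_submodular n b B"
    using pof_profit_submodular_ge[OF v sm] k pay p unfolding A_def by auto
  finally show ?thesis unfolding p_def by simp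
qed

lemma pof_profit_submodular_ge_two_minus:
  assumes "0 < b" "b < B" "B \<le> 1" "2 \<le> n"
  shows "ereal (2 - b) \<le> pof_profit_submodular n b B"
proof (rule ereal_le_if_tendsto_at_right_0)
  show "0 < min (1 - b) (B / b - 1)" using assms by (simp add: field_simps)
next
  fix e assume "0 < e" "e < min (1 - b) (B / b - 1)"
  then show "ereal ((2 - b) * (1 - b * (1 + e)) / ((1 - b) * (1 + e))) \<le> pof_profit_submodular n b B"
    using assms by (intro two_agent_instance_ratio) (auto simp: field_simps)
next
  have "((\<lambda>e. (2 - b) * (1 - b * (1 + e)) / ((1 - b) * (1 + e)))
      \<longlongrightarrow> (2 - b) * (1 - b * (1 + 0)) / ((1 - b) * (1 + 0))) (at_right 0)"
    using assms by (intro tendsto_intros) auto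
  then show "((\<lambda>e. (2 - b) * (1 - b * (1 + e)) / ((1 - b) * (1 + e))) \<longlongrightarrow> 2 - b) (at_right 0)"
    using assms by simp
qed

lemma pof_profit_submodular_ge_uniform:
  fixes k :: nat
  assumes "0 < b" "b < B" "B \<le> 1" "1 \<le> k" "k \<le> n" "real k * b < 2 * B"
  shows "ereal (real k * (2 - real k * b) / (2 - b)) \<le> pof_profit_submodular n b B"
proof (rule ereal_le_if_tendsto_at_right_0)
  show "0 < min 1 (2 * B / (real k * b) - 1)" using assms by (simp add: field_simps)
next
  fix e assume "0 < e" "e < min 1 (2 * B / (real k * b) - 1)"
  then show "ereal (real k * (1 - real k * (b * (1 + e) / 2)) / (1 - b * (1 + e) / 2))
      \<le> pof_profit_submodular n b B"
    using assms by (intro uniform_instance_ratio) (auto simp: field_simps)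
next
  have "((\<lambda>e. real k * (1 - real k * (b * (1 + e) / 2)) / (1 - b * (1 + e) / 2))
      \<longlongrightarrow> real k * (1 - real k * (b * (1 + 0) / 2)) / (1 - b * (1 + 0) / 2)) (at_right 0)"
    using assms by (intro tendsto_intros) auto
  moreover have "real k * (1 - real k * (b * (1 + 0) / 2)) / (1 - b * (1 + 0) / 2)
      = real k * (2 - real k * b) / (2 - b)"
    using assms by (simp add: field_simps)
  ultimately show "((\<lambda>e. real k * (1 - real k * (b * (1 + e) / 2)) / (1 - b * (1 + e) / 2))
      \<longlongrightarrow> real k * (2 - real k * b) / (2 - b)) (at_right 0)"
    by (simp only:)
qed

theorem mainTheorem16:
  fixes b B :: real and n :: nat
  assumes "0 < b" and "b < B" and "B \<le> 1" and "n \<ge> 2"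
  defines "k \<equiv> min (min \<lfloor>1 / b + 1 / 2\<rfloor> (\<lceil>2 * B / b\<rceil> - 1)) (int n)"
  shows "ereal (max (2 - b) (real_of_int k * (2 - real_of_int k * b) / (2 - b)))
           \<le> pof_profit_submodular n b B
         \<and> pof_profit_submodular n b B
           \<le> ereal (real_of_int (min (\<lceil>2 * B / b\<rceil> - 1) (int n)))"
proof -
  have "1 < 1 / b" "2 < 2 * B / b" using assms(1-3) by (simp_all add: field_simps)
  then have "1 \<le> k" unfolding k_def using assms(4) by (auto simp: le_floor_iff less_ceiling_iff)
  have "k < \<lceil>2 * B / b\<rceil>" unfolding k_def by simp
  then have "real_of_int k * b < 2 * B" using assms(1) by (simp add: less_ceiling_iff field_simps)
  moreover have "1 \<le> nat k" "real (nat k) = real_of_int k" using \<open>1 \<le> k\<close> by auto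
  moreover have "nat k \<le> n" unfolding k_def by simp
  ultimately have "ereal (real_of_int k * (2 - real_of_int k * b) / (2 - b))
      \<le> pof_profit_submodular n b B"
    using pof_profit_submodular_ge_uniform[of b B "nat k" n] assms(1-3) by simp
  moreover have "ereal (2 - b) \<le> pof_profit_submodular n b B"
    using pof_profit_submodular_ge_two_minus assms(1-4) by blast
  moreover have "pof_profit_submodular n b B
      \<le> ereal (real_of_int (min (\<lceil>2 * B / b\<rceil> - 1) (int n)))"
    using assms(1-4) by (intro pof_profit_submodular_le max_profit_ratio_le) auto
  ultimately show ?thesis by (simp add: max_def)
qed

end
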